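(* Let $(P_n(x))_{n\ge0}$ be a sequence of polynomials such that $\sum_{n\ge0}P_n(x)\frac{t^n}{n!}=f(t)e^{xt}$ for some $f$ holomorphic at $0$ with $f(0)\neq0$, and such that $P_n(1-x)=(-1)^nP_n(x)$ for all $n\ge0$. Let $N$ be a positive integer. If the function $F(t)=f(t)-\sum_{k=0}^{N}E_k(0)\frac{t^k}{k!}$ is odd, then $P_n(x)=E_n(x)$ for all $n\ge0$ and $f(t)=\frac{2}{e^t+1}$.
   Context: $E_n(x)$ denotes the Euler polynomials, defined by $\sum_{n\ge0}E_n(x)\frac{t^n}{n!}=\frac{2e^{xt}}{e^t+1}$. *)

theory Defs
  imports "HOL-Analysis.Analysis" "HOL-Computational_Algebra.Polynomial"
    "HOL-Computational_Algebra.Formal_Power_Series"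
begin

definition euler_polynomial :: "nat \<Rightarrow> complex \<Rightarrow> complex" where
  "euler_polynomial n x =
     fact n * fps_nth (2 * fps_exp x / (fps_exp 1 + 1)) n"

end

theory Submission imports Defs "HOL-Complex_Analysis.Laurent_Convergence" begin

text \<open>Evaluating the generating function at x = 1 and, by the symmetry P_n(1 - x) =
  (-1)^n P_n(x), at x = 0 with t replaced by -t gives f(t) e^t = f(-t). Oddness of F,
  together with E_k(0) = 0 for even k > 0, gives f(t) + f(-t) = 2. Hence f(t) (e^t + 1) = 2,
  so f is the Euler generating function near 0, and comparing Taylor coefficients of
  f(t) e^{xt} yields P_n = E_n.\<close>

lemma fps_two_div_exp_plus_one_reflect:
  "2 / (fps_exp 1 + 1) + fps_compose (2 / (fps_exp 1 + 1)) (- fps_X) = (2 :: 'a :: field_char_0 fps)"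
proof -
  define G where "G = (2 / (fps_exp 1 + 1) :: 'a fps)"
  define A where "A = (fps_exp 1 :: 'a fps)"
  define B where "B = (fps_exp (-1) :: 'a fps)"
  define G' where "G' = fps_compose G (- fps_X)"
  have AB: "A * B = 1"
    unfolding A_def B_def by (metis add.right_inverse fps_exp_add_mult fps_exp_0)
  have A1_unit: "fps_nth (A + 1) 0 \<noteq> 0"
    by (simp add: A_def)
  then have A1: "A + 1 \<noteq> 0"
    by (metis fps_zero_nth)
  have GA: "G * (A + 1) = 2"
    unfolding G_def A_def[symmetric]
    using A1_unit by (simp add: fps_divide_unit inverse_mult_eq_1 mult.assoc)
  have "fps_compose (G * (A + 1)) (- fps_X) = G' * (B + 1)"
    unfolding G'_def by (simp add: fps_compose_mult_distrib fps_compose_add_distrib A_def B_def)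
  moreover have "fps_compose (2 :: 'a fps) (- fps_X) = 2"
    by (metis one_add_one fps_compose_add_distrib fps_compose_1)
  ultimately have GB: "G' * (B + 1) = 2"
    using GA by simp
  have "G' * (A + 1) = G' * (B + 1) * A"
    using AB by (simp add: algebra_simps)
  also have "\<dots> = 2 * A"
    using GB by simp
  finally have "(G + G') * (A + 1) = 2 * (A + 1)"
    using GA by (simp add: algebra_simps)
  then show ?thesis
    using A1 unfolding G_def[symmetric] G'_def[symmetric] by (metis mult_right_cancel)
qed

lemma euler_polynomial_0_add_reflect:
  "euler_polynomial k 0 + (-1) ^ k * euler_polynomial k 0 = (if k = 0 then 2 else 0)"
proof -
  define G where "G = (2 / (fps_exp 1 + 1) :: complex fps)"
  have "fps_nth (G + fps_compose G (- fps_X)) k = fps_nth (2 :: complex fps) k"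
    unfolding G_def by (simp only: fps_two_div_exp_plus_one_reflect)
  then have "fps_nth G k + (-1) ^ k * fps_nth G k = (if k = 0 then 2 else 0)"
    by (simp add: fps_compose_uminus' numeral_fps_const)
  moreover have "euler_polynomial k 0 = fact k * fps_nth G k"
    unfolding euler_polynomial_def G_def by (simp only: fps_exp_0 mult.right_neutral)
  ultimately show ?thesis
    by (metis (no_types, lifting) distrib_left mult.left_commute mult_zero_right fact_0
        mult_1 of_nat_1)
qed

lemma euler_taylor_polynomial_add_reflect:
  "(\<Sum>k\<le>N. euler_polynomial k 0 * t ^ k / fact k)
     + (\<Sum>k\<le>N. euler_polynomial k 0 * (- t) ^ k / fact k) = 2"
proof -
  have "(\<Sum>k\<le>N. euler_polynomial k 0 * t ^ k / fact k)
          + (\<Sum>k\<le>N. euler_polynomial k 0 * (- t) ^ k / fact k)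
        = (\<Sum>k\<le>N. (euler_polynomial k 0 + (-1) ^ k * euler_polynomial k 0) * t ^ k / fact k)"
    by (simp add: sum.distrib[symmetric] power_minus[of t] add_divide_distrib algebra_simps)
  also have "\<dots> = (\<Sum>k\<le>N. (if k = 0 then 2 else 0) * t ^ k / fact k)"
    by (simp only: euler_polynomial_0_add_reflect)
  also have "\<dots> = 2"
    by (induction N) auto
  finally show ?thesis .
qed

lemma has_fps_expansion_euler_egf:
  "(\<lambda>t. 2 * exp (x * t) / (exp t + 1 :: complex)) has_fps_expansion (2 * fps_exp x / (fps_exp 1 + 1))"
  by (rule has_fps_expansion_divide'[OF
        has_fps_expansion_mult[OF has_fps_expansion_numeral has_fps_expansion_exp]
        has_fps_expansion_add[OF has_fps_expansion_exp1 has_fps_expansion_1]]) simp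

lemma egf_reflect_by_symmetry:
  fixes P :: "nat \<Rightarrow> complex poly"
  assumes gen: "\<And>x t. norm t < r \<Longrightarrow>
                 (\<lambda>n. poly (P n) x * t ^ n / fact n) sums (f t * exp (x * t))"
    and symm: "\<And>n x. poly (P n) (1 - x) = (-1) ^ n * poly (P n) x"
    and t: "norm t < r"
  shows "f t * exp t = f (- t)"
proof -
  have "(\<lambda>n. poly (P n) 1 * t ^ n / fact n) = (\<lambda>n. poly (P n) 0 * (- t) ^ n / fact n)"
    using symm[of _ 0] by (simp add: power_minus[of t] mult_ac)
  then have "(\<lambda>n. poly (P n) 1 * t ^ n / fact n) sums f (- t)"
    using gen[of "- t" 0] t by simp
  moreover have "(\<lambda>n. poly (P n) 1 * t ^ n / fact n) sums (f t * exp t)"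
    using gen[of t 1] t by simp
  ultimately show ?thesis
    using sums_unique2 by blast
qed

lemma coeff_eq_of_egf_sums:
  fixes a :: "nat \<Rightarrow> complex"
  assumes "\<forall>\<^sub>F t in nhds 0. (\<lambda>n. a n * t ^ n / fact n) sums g t"
    and "g has_fps_expansion F"
  shows "a n = fact n * fps_nth F n"
proof -
  have "g has_fps_expansion Abs_fps (\<lambda>n. a n / fact n)"
    by (rule has_fps_expansionI) (use assms(1) in simp)
  then have "Abs_fps (\<lambda>n. a n / fact n) = F"
    using assms(2) fps_expansion_unique_complex by blast
  then show ?thesis
    by (metis fact_nonzero fps_nth_Abs_fps nonzero_mult_div_cancel_left of_nat_eq_0_iff
        times_divide_eq_right)
qed

lemma eventually_exp_plus_one_nonzero: "\<forall>\<^sub>F t in nhds 0. exp t + 1 \<noteq> (0 :: complex)"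
proof -
  have "isCont (\<lambda>t::complex. exp t + 1) 0"
    by (intro continuous_intros)
  then have "((\<lambda>t::complex. exp t + 1) \<longlongrightarrow> 2) (nhds 0)"
    using tendsto_at_iff_tendsto_nhds[of "\<lambda>t::complex. exp t + 1" 0] by (simp add: isCont_def)
  then show ?thesis
    by (rule tendsto_imp_eventually_ne) simp
qed

theorem mainTheorem6:
  fixes P :: "nat \<Rightarrow> complex poly" and f :: "complex \<Rightarrow> complex" and N :: nat
  assumes hol: "f analytic_on {0}"
    and f0: "f 0 \<noteq> 0"
    and gen: "\<exists>r>0. \<forall>x t. norm t < r \<longrightarrow>
                 (\<lambda>n. poly (P n) x * t ^ n / fact n) sums (f t * exp (x * t))"
    and symm: "\<And>n x. poly (P n) (1 - x) = (-1) ^ n * poly (P n) x"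
    and Npos: "N > 0"
    and odd: "\<forall>\<^sub>F t in nhds 0.
       f (- t) - (\<Sum>k\<le>N. euler_polynomial k 0 * (- t) ^ k / fact k)
         = - (f t - (\<Sum>k\<le>N. euler_polynomial k 0 * t ^ k / fact k))"
  shows "(\<forall>n x. poly (P n) x = euler_polynomial n x)
         \<and> (\<forall>\<^sub>F t in nhds 0. f t = 2 / (exp t + 1))"
proof -
  obtain r where "r > 0" and R: "\<And>x t. norm t < r \<Longrightarrow>
       (\<lambda>n. poly (P n) x * t ^ n / fact n) sums (f t * exp (x * t))"
    using gen by blast
  then have near: "\<forall>\<^sub>F t in nhds 0. norm (t :: complex) < r"
    using eventually_nhds_in_open[of "ball (0::complex) r" 0] by (simp add: dist_0_norm)
  have f_eq: "\<forall>\<^sub>F t in nhds 0. f t = 2 / (exp t + 1)"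
    using odd near eventually_exp_plus_one_nonzero
  proof eventually_elim
    case (elim t)
    then have "f t + f (- t) = 2"
      using euler_taylor_polynomial_add_reflect[where N = N and t = t] by (simp add: algebra_simps)
    then have "f t * (exp t + 1) = 2"
      using egf_reflect_by_symmetry[OF R symm elim(2)] by (simp add: algebra_simps)
    then show ?case
      using elim(3) by (simp add: field_simps)
  qed
  have "poly (P n) x = euler_polynomial n x" for n x
  proof (rule coeff_eq_of_egf_sums[THEN trans])
    show "\<forall>\<^sub>F t in nhds 0. (\<lambda>n. poly (P n) x * t ^ n / fact n) sums (f t * exp (x * t))"
      using near by eventually_elim (rule R)
    have "\<forall>\<^sub>F t in nhds 0. 2 * exp (x * t) / (exp t + 1) = f t * exp (x * t)"
      using f_eq by eventually_elim simp
    then show "(\<lambda>t. f t * exp (x * t)) has_fps_expansion (2 * fps_exp x / (fps_exp 1 + 1))"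
      using has_fps_expansion_euler_egf[of x] has_fps_expansion_cong[OF _ refl] by metis
  qed (simp add: euler_polynomial_def)
  with f_eq show ?thesis
    by blast
qed

end
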